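(* Let $\boldsymbol{\lambda}\in\Delta_N$, $\boldsymbol{\nu}=(\nu_1,\dots,\nu_N)$, $\widetilde{\boldsymbol{\nu}}=(\widetilde\nu_1,\dots,\widetilde\nu_N)\in\mathcal{P}_1(\mathbb{R})^N$ and $\theta\in[0,1]$. Then $$W_1(\mathrm{VMed}_{\boldsymbol{\lambda}}(\theta,\boldsymbol{\nu}),\mathrm{VMed}_{\boldsymbol{\lambda}}(\theta,\widetilde{\boldsymbol{\nu}}))\le\sum_{i=1}^NW_1(\nu_i,\widetilde\nu_i)$$ and $$W_1(\mathrm{HMed}_{\boldsymbol{\lambda}}(\theta,\boldsymbol{\nu}),\mathrm{HMed}_{\boldsymbol{\lambda}}(\theta,\widetilde{\boldsymbol{\nu}}))\le\sum_{i=1}^NW_1(\nu_i,\widetilde\nu_i).$$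
   Context: $\Delta_N$ is the unit simplex of $\mathbb{R}^N$; $\mathcal{P}_1(\mathbb{R})$ denotes Borel probability measures on $\mathbb{R}$ with finite first moment and $W_1$ the 1-Wasserstein distance. For $\nu\in\mathcal{P}_1(\mathbb{R})$, $F_\nu(x)=\nu((-\infty,x])$ and $Q_\nu(t)=\inf\{x:F_\nu(x)\ge t\}$. For $\mathbf{x}\in\mathbb{R}^N$, $\mathrm{M}^-_{\boldsymbol{\lambda}}(\mathbf{x})=\inf\{y:\sum_{i:x_i\le y}\lambda_i\ge\frac12\}$, $\mathrm{M}^+_{\boldsymbol{\lambda}}(\mathbf{x})=\sup\{y:\sum_{i:x_i<y}\lambda_i\le\frac12\}$. Vertical selection: $\mathrm{VMed}_{\boldsymbol{\lambda}}(\theta,\boldsymbol{\nu})$ is the probability measure with cdf $(1-\theta)\mathrm{M}^-_{\boldsymbol{\lambda}}(F_{\nu_1}(x),\dots,F_{\nu_N}(x))+\theta\mathrm{M}^+_{\boldsymbol{\lambda}}(F_{\nu_1}(x),\dots,F_{\nu_N}(x))$. Horizontal selection: $\mathrm{HMed}_{\boldsymbol{\lambda}}(\theta,\boldsymbol{\nu})$ is the probability measure whose quantile function is, for $t\in(0,1)$, $(1-\theta)\mathrm{M}^-_{\boldsymbol{\lambda}}(Q_{\nu_1}(t),\dots,Q_{\nu_N}(t))+\theta\mathrm{M}^+_{\boldsymbol{\lambda}}(Q_{\nu_1}(t),\dots,Q_{\nu_N}(t))$. Both belong to $\mathcal{P}_1(\mathbb{R})$. *)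

theory Defs
  imports "HOL-Probability.Probability"
begin

definition in_simplex :: "nat \<Rightarrow> (nat \<Rightarrow> real) \<Rightarrow> bool" where
  "in_simplex N lam \<longleftrightarrow> (\<forall>i\<in>{1..N}. 0 \<le> lam i) \<and> (\<Sum>i=1..N. lam i) = 1"

definition P1 :: "real measure \<Rightarrow> bool" where
  "P1 \<nu> \<longleftrightarrow> real_distribution \<nu> \<and> integrable \<nu> (\<lambda>x. x)"

definition couplings :: "real measure \<Rightarrow> real measure \<Rightarrow> (real \<times> real) measure set" where
  "couplings \<mu> \<nu> = {\<pi>. prob_space \<pi> \<and> sets \<pi> = sets (borel :: (real \<times> real) measure)
      \<and> distr \<pi> borel fst = \<mu> \<and> distr \<pi> borel snd = \<nu>}"

definition W1 :: "real measure \<Rightarrow> real measure \<Rightarrow> real" where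
  "W1 \<mu> \<nu> = enn2real (INF \<pi>\<in>couplings \<mu> \<nu>. \<integral>\<^sup>+ p. ennreal \<bar>fst p - snd p\<bar> \<partial>\<pi>)"

definition quantile :: "real measure \<Rightarrow> real \<Rightarrow> real" where
  "quantile \<nu> t = Inf {x. t \<le> cdf \<nu> x}"

definition Mminus :: "nat \<Rightarrow> (nat \<Rightarrow> real) \<Rightarrow> (nat \<Rightarrow> real) \<Rightarrow> real" where
  "Mminus N lam x = Inf {y. (\<Sum>i | i \<in> {1..N} \<and> x i \<le> y. lam i) \<ge> 1/2}"

definition Mplus :: "nat \<Rightarrow> (nat \<Rightarrow> real) \<Rightarrow> (nat \<Rightarrow> real) \<Rightarrow> real" where
  "Mplus N lam x = Sup {y. (\<Sum>i | i \<in> {1..N} \<and> x i < y. lam i) \<le> 1/2}"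

definition VMed :: "nat \<Rightarrow> (nat \<Rightarrow> real) \<Rightarrow> real \<Rightarrow> (nat \<Rightarrow> real measure) \<Rightarrow> real measure" where
  "VMed N lam \<theta> \<nu> = (THE \<mu>. real_distribution \<mu> \<and>
     (\<forall>x. cdf \<mu> x = (1 - \<theta>) * Mminus N lam (\<lambda>i. cdf (\<nu> i) x)
                    + \<theta> * Mplus N lam (\<lambda>i. cdf (\<nu> i) x)))"

definition HMed :: "nat \<Rightarrow> (nat \<Rightarrow> real) \<Rightarrow> real \<Rightarrow> (nat \<Rightarrow> real measure) \<Rightarrow> real measure" where
  "HMed N lam \<theta> \<nu> = (THE \<mu>. real_distribution \<mu> \<and>
     (\<forall>t\<in>{0<..<1}. quantile \<mu> t = (1 - \<theta>) * Mminus N lam (\<lambda>i. quantile (\<nu> i) t)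
                    + \<theta> * Mplus N lam (\<lambda>i. quantile (\<nu> i) t)))"

end

theory Submission
  imports Defs
begin

text \<open>The combination \<open>(1 - \<theta>) M\<^sup>- + \<theta> M\<^sup>+\<close> of the weighted lower and upper medians is
monotone and commutes with adding a constant to all arguments, hence
\<open>|M(a) - M(b)| \<le> \<Sum>\<^sub>i |a\<^sub>i - b\<^sub>i|\<close>. The same two properties show that it preserves
monotonicity, one-sided continuity and limits, so the vertical (resp. horizontal) selection is the
law whose cdf (resp. quantile function) is the pointwise combination of the cdfs (resp. quantile
functions) of the \<open>\<nu>\<^sub>i\<close>. On the real line \<open>W\<^sub>1(\<mu>, \<nu>) = \<integral> |F\<^sub>\<mu> - F\<^sub>\<nu>| dx = \<integral>\<^sub>0\<^sup>1 |Q\<^sub>\<mu> - Q\<^sub>\<nu>| dt\<close>,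
the quantile coupling being optimal; integrating the pointwise bound gives both inequalities.\<close>

section \<open>Weighted medians\<close>

lemma abs_le_sum_abs:
  fixes f :: "'a \<Rightarrow> 'b::linordered_idom"
  shows "finite A \<Longrightarrow> i \<in> A \<Longrightarrow> \<bar>f i\<bar> \<le> (\<Sum>j\<in>A. \<bar>f j\<bar>)"
  by (intro member_le_sum) auto

lemma Mminus_le_shift:
  assumes lam: "in_simplex N lam" and ab: "\<And>i. i \<in> {1..N} \<Longrightarrow> a i \<le> b i + d"
  shows "Mminus N lam a \<le> Mminus N lam b + d"
proof -
  define S where "S c = {y. (\<Sum>i | i \<in> {1..N} \<and> c i \<le> y. lam i) \<ge> 1/2}" for c :: "nat \<Rightarrow> real"
  have "{i. i \<in> {1..N} \<and> b i \<le> (\<Sum>j=1..N. \<bar>b j\<bar>)} = {1..N}"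
    using abs_le_sum_abs[of "{1..N}" _ b] by force
  then have "(\<Sum>j=1..N. \<bar>b j\<bar>) \<in> S b"
    using lam by (simp add: S_def in_simplex_def)
  then have nonempty: "S b \<noteq> {}" by blast
  have "- (\<Sum>j=1..N. \<bar>a j\<bar>) \<le> y" if "y \<in> S a" for y
  proof (rule ccontr)
    assume "\<not> ?thesis"
    then have "{i. i \<in> {1..N} \<and> a i \<le> y} = {}"
      using abs_le_sum_abs[of "{1..N}" _ a] by force
    then show False using that by (simp only: S_def mem_Collect_eq) simp
  qed
  then have bdd: "bdd_below (S a)" by (rule bdd_belowI)
  have shift: "y + d \<in> S a" if "y \<in> S b" for y
  proof -
    have "(\<Sum>i | i \<in> {1..N} \<and> b i \<le> y. lam i) \<le> (\<Sum>i | i \<in> {1..N} \<and> a i \<le> y + d. lam i)"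
      using ab lam by (intro sum_mono2) (force simp: in_simplex_def)+
    then show ?thesis using that by (simp add: S_def)
  qed
  have "Inf (S a) - d \<le> Inf (S b)"
  proof (rule cInf_greatest[OF nonempty])
    fix y assume "y \<in> S b"
    then show "Inf (S a) - d \<le> y" using cInf_lower[OF shift bdd] by force
  qed
  then show ?thesis unfolding Mminus_def S_def by simp
qed

lemma Mplus_le_shift:
  assumes lam: "in_simplex N lam" and ab: "\<And>i. i \<in> {1..N} \<Longrightarrow> a i \<le> b i + d"
  shows "Mplus N lam a \<le> Mplus N lam b + d"
proof -
  define S where "S c = {y. (\<Sum>i | i \<in> {1..N} \<and> c i < y. lam i) \<le> 1/2}" for c :: "nat \<Rightarrow> real"
  have "{i. i \<in> {1..N} \<and> a i < - (\<Sum>j=1..N. \<bar>a j\<bar>)} = {}"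
    using abs_le_sum_abs[of "{1..N}" _ a] by force
  then have "- (\<Sum>j=1..N. \<bar>a j\<bar>) \<in> S a"
    by (simp only: S_def mem_Collect_eq) simp
  then have nonempty: "S a \<noteq> {}" by blast
  have "y \<le> (\<Sum>j=1..N. \<bar>b j\<bar>) + 1" if "y \<in> S b" for y
  proof (rule ccontr)
    assume "\<not> ?thesis"
    then have "{i. i \<in> {1..N} \<and> b i < y} = {1..N}"
      using abs_le_sum_abs[of "{1..N}" _ b] by force
    then show False using that lam by (simp only: S_def mem_Collect_eq) (simp add: in_simplex_def)
  qed
  then have bdd: "bdd_above (S b)" by (rule bdd_aboveI)
  have shift: "y - d \<in> S b" if "y \<in> S a" for y
  proof -
    have "(\<Sum>i | i \<in> {1..N} \<and> b i < y - d. lam i) \<le> (\<Sum>i | i \<in> {1..N} \<and> a i < y. lam i)"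
      using ab lam by (intro sum_mono2) (force simp: in_simplex_def)+
    then show ?thesis using that by (simp add: S_def)
  qed
  have "Sup (S a) \<le> Sup (S b) + d"
  proof (rule cSup_least[OF nonempty])
    fix y assume "y \<in> S a"
    then show "y \<le> Sup (S b) + d" using cSup_upper[OF shift bdd] by force
  qed
  then show ?thesis unfolding Mplus_def S_def by simp
qed

lemma Mminus_const:
  assumes "in_simplex N lam"
  shows "Mminus N lam (\<lambda>i. c) = c"
proof -
  have "{i. i \<in> {1..N} \<and> c \<le> y} = (if c \<le> y then {1..N} else {})" for y
    by auto
  then have "{y. (\<Sum>i | i \<in> {1..N} \<and> c \<le> y. lam i) \<ge> 1/2} = {c..}"
    using assms by (auto simp: in_simplex_def)
  then show ?thesis unfolding Mminus_def by simp
qed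

lemma Mplus_const:
  assumes "in_simplex N lam"
  shows "Mplus N lam (\<lambda>i. c) = c"
proof -
  have "{i. i \<in> {1..N} \<and> c < y} = (if c < y then {1..N} else {})" for y
    by auto
  then have "{y. (\<Sum>i | i \<in> {1..N} \<and> c < y. lam i) \<le> 1/2} = {..c}"
    using assms by (auto simp: in_simplex_def not_less[symmetric])
  then show ?thesis unfolding Mplus_def by simp
qed

definition median_mix :: "nat \<Rightarrow> (nat \<Rightarrow> real) \<Rightarrow> real \<Rightarrow> (nat \<Rightarrow> real) \<Rightarrow> real" where
  "median_mix N lam \<theta> a = (1 - \<theta>) * Mminus N lam a + \<theta> * Mplus N lam a"

context
  fixes N :: nat and lam :: "nat \<Rightarrow> real" and \<theta> :: real
  assumes lam: "in_simplex N lam" and \<theta>: "0 \<le> \<theta>" "\<theta> \<le> 1"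
begin

lemma median_mix_le_shift:
  assumes "\<And>i. i \<in> {1..N} \<Longrightarrow> a i \<le> b i + d"
  shows "median_mix N lam \<theta> a \<le> median_mix N lam \<theta> b + d"
proof -
  have "(1 - \<theta>) * Mminus N lam a \<le> (1 - \<theta>) * (Mminus N lam b + d)"
    using Mminus_le_shift[OF lam assms] \<theta> by (intro mult_left_mono) auto
  moreover have "\<theta> * Mplus N lam a \<le> \<theta> * (Mplus N lam b + d)"
    using Mplus_le_shift[OF lam assms] \<theta> by (intro mult_left_mono) auto
  ultimately show ?thesis unfolding median_mix_def by (simp add: algebra_simps)
qed

lemma median_mix_mono:
  "(\<And>i. i \<in> {1..N} \<Longrightarrow> a i \<le> b i) \<Longrightarrow> median_mix N lam \<theta> a \<le> median_mix N lam \<theta> b"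
  using median_mix_le_shift[of a b 0] by simp

lemma median_mix_const: "median_mix N lam \<theta> (\<lambda>i. c) = c"
  using Mminus_const[OF lam] Mplus_const[OF lam] by (simp add: median_mix_def algebra_simps)

lemma abs_median_mix_diff_le:
  "\<bar>median_mix N lam \<theta> a - median_mix N lam \<theta> b\<bar> \<le> (\<Sum>i=1..N. \<bar>a i - b i\<bar>)"
proof -
  have "\<bar>a i - b i\<bar> \<le> (\<Sum>i=1..N. \<bar>a i - b i\<bar>)" if "i \<in> {1..N}" for i
    using abs_le_sum_abs[OF _ that, of "\<lambda>i. a i - b i"] by simp
  then have "median_mix N lam \<theta> a \<le> median_mix N lam \<theta> b + (\<Sum>i=1..N. \<bar>a i - b i\<bar>)"
    and "median_mix N lam \<theta> b \<le> median_mix N lam \<theta> a + (\<Sum>i=1..N. \<bar>a i - b i\<bar>)"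
    by (intro median_mix_le_shift; force simp: abs_le_iff)+
  then show ?thesis by linarith
qed

lemma tendsto_median_mix:
  assumes "\<And>i. i \<in> {1..N} \<Longrightarrow> (f i \<longlongrightarrow> l i) F"
  shows "((\<lambda>s. median_mix N lam \<theta> (\<lambda>i. f i s)) \<longlongrightarrow> median_mix N lam \<theta> l) F"
proof -
  have "((\<lambda>s. \<Sum>i=1..N. \<bar>f i s - l i\<bar>) \<longlongrightarrow> 0) F"
    using assms by (intro tendsto_null_sum tendsto_rabs_zero) (simp add: LIM_zero)
  then have "((\<lambda>s. median_mix N lam \<theta> (\<lambda>i. f i s) - median_mix N lam \<theta> l) \<longlongrightarrow> 0) F"
    by (rule Lim_null_comparison[rotated]) (intro always_eventually allI, simp only: real_norm_def abs_median_mix_diff_le)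
  then show ?thesis by (rule LIM_zero_cancel)
qed

lemma nn_integral_abs_median_mix_diff_le:
  assumes "\<And>i. i \<in> {1..N} \<Longrightarrow> f i \<in> borel_measurable M"
    and "\<And>i. i \<in> {1..N} \<Longrightarrow> g i \<in> borel_measurable M"
  shows "(\<integral>\<^sup>+x. ennreal \<bar>median_mix N lam \<theta> (\<lambda>i. f i x) - median_mix N lam \<theta> (\<lambda>i. g i x)\<bar> \<partial>M)
    \<le> (\<Sum>i=1..N. \<integral>\<^sup>+x. ennreal \<bar>f i x - g i x\<bar> \<partial>M)"
proof -
  have "(\<integral>\<^sup>+x. ennreal \<bar>median_mix N lam \<theta> (\<lambda>i. f i x) - median_mix N lam \<theta> (\<lambda>i. g i x)\<bar> \<partial>M)
      \<le> (\<integral>\<^sup>+x. (\<Sum>i=1..N. ennreal \<bar>f i x - g i x\<bar>) \<partial>M)"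
    by (intro nn_integral_mono order_trans[OF ennreal_leI[OF abs_median_mix_diff_le]]) simp
  also have "\<dots> = (\<Sum>i=1..N. \<integral>\<^sup>+x. ennreal \<bar>f i x - g i x\<bar> \<partial>M)"
    using assms by (intro nn_integral_sum) auto
  finally show ?thesis .
qed

end

section \<open>Quantile functions\<close>

abbreviation uniform01 :: "real measure" where
  "uniform01 \<equiv> restrict_space lborel {0<..<1}"

lemma space_uniform01 [simp]: "space uniform01 = {0<..<1}"
  by (simp add: space_restrict_space)

lemma prob_space_uniform01: "prob_space uniform01"
  by (rule prob_space_restrict_space) auto

lemma emeasure_uniform01_Ioc:
  assumes "0 \<le> a" "b \<le> 1"
  shows "emeasure uniform01 ({0<..<1} \<inter> {a<..b}) = ennreal (max 0 (b - a))"
proof -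
  have "emeasure uniform01 ({0<..<1} \<inter> {a<..b}) = emeasure lborel ({0<..<1} \<inter> {a<..b})"
    by (rule emeasure_restrict_space) auto
  also have "\<dots> = ennreal (max 0 (b - a))"
  proof (cases "a < b")
    case True
    then have "{0<..<1} \<inter> {a<..b} = (if b < 1 then {a<..b} else {a<..<1})"
      using assms by auto
    then show ?thesis using True assms by simp
  qed simp
  finally show ?thesis .
qed

lemma measure_uniform01_Ioc:
  "0 \<le> a \<Longrightarrow> b \<le> 1 \<Longrightarrow> measure uniform01 ({0<..<1} \<inter> {a<..b}) = max 0 (b - a)"
  by (simp add: measure_def emeasure_uniform01_Ioc del: ennreal_max_0)

lemma borel_measurable_uniform01I:
  fixes G :: "real \<Rightarrow> real"
  assumes "mono_on {0<..<1} G"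
  shows "G \<in> borel_measurable uniform01"
proof -
  have "sets uniform01 = sets (restrict_space borel {0<..<1})"
    by (rule sets_restrict_space_cong) simp
  then show ?thesis
    using borel_measurable_mono_on_fnc[OF assms] measurable_cong_sets by blast
qed

lemma cdf_distr:
  "f \<in> borel_measurable M \<Longrightarrow> cdf (distr M borel f) x = measure M {\<omega>\<in>space M. f \<omega> \<le> x}"
  by (simp add: cdf_def measure_distr vimage_def Int_def conj_commute)

lemma borel_measurable_cdf: "real_distribution \<mu> \<Longrightarrow> cdf \<mu> \<in> borel_measurable borel"
  by (rule cdf_distribution.measurable_C, rule cdf_distribution.intro)

lemma quantile_le_iff:
  assumes "real_distribution \<mu>" "0 < t" "t < 1"
  shows "quantile \<mu> t \<le> x \<longleftrightarrow> t \<le> cdf \<mu> x"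
proof -
  interpret cdf_distribution \<mu> by (rule cdf_distribution.intro) fact
  show ?thesis using pseudoinverse[of t x] assms unfolding quantile_def by simp
qed

lemma quantile_mono_on:
  assumes "real_distribution \<mu>"
  shows "mono_on {0<..<1} (quantile \<mu>)"
proof -
  interpret cdf_distribution \<mu> by (rule cdf_distribution.intro) fact
  show ?thesis unfolding quantile_def by (rule mono_I)
qed

lemma distr_uniform01_quantile:
  assumes "real_distribution \<mu>"
  shows "distr uniform01 borel (quantile \<mu>) = \<mu>"
proof -
  interpret cdf_distribution \<mu> by (rule cdf_distribution.intro) fact
  show ?thesis unfolding quantile_def by (rule distr_I_eq_M)
qed

lemma borel_measurable_quantile: "real_distribution \<mu> \<Longrightarrow> quantile \<mu> \<in> borel_measurable uniform01"
  by (rule borel_measurable_uniform01I[OF quantile_mono_on])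

lemma tendsto_quantile_at_left:
  assumes \<mu>: "real_distribution \<mu>" and t: "0 < t" "t < 1"
  shows "(quantile \<mu> \<longlongrightarrow> quantile \<mu> t) (at_left t)"
proof (rule order_tendstoI)
  fix a assume "a < quantile \<mu> t"
  then have "max (cdf \<mu> a) 0 < t" using quantile_le_iff[OF assms, of a] t by simp
  from eventually_at_left_real[OF this]
  show "\<forall>\<^sub>F s in at_left t. a < quantile \<mu> s"
  proof (rule eventually_mono)
    fix s assume "s \<in> {max (cdf \<mu> a) 0<..<t}"
    then show "a < quantile \<mu> s" using quantile_le_iff[OF \<mu>, of s a] t by auto
  qed
next
  fix a assume "quantile \<mu> t < a"
  from eventually_at_left_real[OF t(1)]
  show "\<forall>\<^sub>F s in at_left t. quantile \<mu> s < a"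
    by eventually_elim (use mono_onD[OF quantile_mono_on[OF \<mu>]] t \<open>quantile \<mu> t < a\<close> in force)
qed

lemma real_distribution_eqI_quantile:
  assumes "real_distribution \<mu>" "real_distribution \<nu>"
    and "\<And>t. t \<in> {0<..<1} \<Longrightarrow> quantile \<mu> t = quantile \<nu> t"
  shows "\<mu> = \<nu>"
proof -
  have "distr uniform01 borel (quantile \<mu>) = distr uniform01 borel (quantile \<nu>)"
    using assms(3) by (intro distr_cong) auto
  then show ?thesis using distr_uniform01_quantile assms(1,2) by metis
qed

lemma cdf_distr_uniform01_ge_iff:
  fixes G :: "real \<Rightarrow> real"
  assumes mono: "mono_on {0<..<1} G"
    and left_cont: "\<And>t. t \<in> {0<..<1} \<Longrightarrow> (G \<longlongrightarrow> G t) (at_left t)"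
    and t: "t \<in> {0<..<1}"
  shows "t \<le> cdf (distr uniform01 borel G) x \<longleftrightarrow> G t \<le> x"
proof -
  interpret U: prob_space uniform01 by (rule prob_space_uniform01)
  have G: "G \<in> borel_measurable uniform01" by (rule borel_measurable_uniform01I[OF mono])
  define S where "S = {s \<in> space uniform01. G s \<le> x}"
  have S: "S \<in> sets uniform01" unfolding S_def using G by measurable
  have sets_Ioc: "{0<..<1} \<inter> {0<..b} \<in> sets uniform01" for b :: real
    by (subst sets_restrict_space_iff) auto
  have "t \<le> measure uniform01 S \<longleftrightarrow> G t \<le> x"
  proof
    assume "G t \<le> x"
    then have "{0<..<1} \<inter> {0<..t} \<subseteq> S"
      unfolding S_def using mono_onD[OF mono] t by force
    then have "measure uniform01 ({0<..<1} \<inter> {0<..t}) \<le> measure uniform01 S"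
      using S by (rule U.finite_measure_mono)
    then show "t \<le> measure uniform01 S" using t by (simp add: measure_uniform01_Ioc)
  next
    assume "t \<le> measure uniform01 S"
    show "G t \<le> x"
    proof (rule ccontr)
      assume "\<not> G t \<le> x"
      then have "\<forall>\<^sub>F s in at_left t. x < G s"
        using order_tendstoD(1)[OF left_cont[OF t]] by simp
      then obtain b where b: "b < t" "\<And>s. b < s \<Longrightarrow> s < t \<Longrightarrow> x < G s"
        unfolding eventually_at_left_field by blast
      have "S \<subseteq> {0<..<1} \<inter> {0<..max b 0}"
      proof
        fix s assume "s \<in> S"
        then have s: "s \<in> {0<..<1}" "G s \<le> x" unfolding S_def by auto
        then have "s < t" using mono_onD[OF mono, of t s] t \<open>\<not> G t \<le> x\<close> by force
        then show "s \<in> {0<..<1} \<inter> {0<..max b 0}" using b(2)[of s] s by force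
      qed
      then have "measure uniform01 S \<le> measure uniform01 ({0<..<1} \<inter> {0<..max b 0})"
        using sets_Ioc by (rule U.finite_measure_mono)
      also have "\<dots> = max b 0" using b(1) t by (simp add: measure_uniform01_Ioc)
      finally show False using \<open>t \<le> measure uniform01 S\<close> b(1) t by (simp add: max_def split: if_splits)
    qed
  qed
  then show ?thesis unfolding S_def cdf_distr[OF G] .
qed

lemma quantile_distr_uniform01:
  fixes G :: "real \<Rightarrow> real"
  assumes mono: "mono_on {0<..<1} G"
    and left_cont: "\<And>t. t \<in> {0<..<1} \<Longrightarrow> (G \<longlongrightarrow> G t) (at_left t)"
  shows "real_distribution (distr uniform01 borel G)"
    and "t \<in> {0<..<1} \<Longrightarrow> quantile (distr uniform01 borel G) t = G t"
proof -
  show "real_distribution (distr uniform01 borel G)"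
    by (rule prob_space.real_distribution_distr[OF prob_space_uniform01 borel_measurable_uniform01I[OF mono]])
  show "quantile (distr uniform01 borel G) t = G t" if t: "t \<in> {0<..<1}"
  proof -
    have "{x. t \<le> cdf (distr uniform01 borel G) x} = {G t..}"
      using cdf_distr_uniform01_ge_iff[OF mono left_cont t] by auto
    then show ?thesis unfolding quantile_def by simp
  qed
qed

section \<open>The Wasserstein distance on the real line\<close>

definition wasserstein1 :: "real measure \<Rightarrow> real measure \<Rightarrow> ennreal" where
  "wasserstein1 \<mu> \<nu> = (INF \<pi>\<in>couplings \<mu> \<nu>. \<integral>\<^sup>+ p. ennreal \<bar>fst p - snd p\<bar> \<partial>\<pi>)"

lemma W1_eq_enn2real_wasserstein1: "W1 \<mu> \<nu> = enn2real (wasserstein1 \<mu> \<nu>)"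
  unfolding W1_def wasserstein1_def ..

definition cdf_distance :: "real measure \<Rightarrow> real measure \<Rightarrow> ennreal" where
  "cdf_distance \<mu> \<nu> = (\<integral>\<^sup>+x. ennreal \<bar>cdf \<mu> x - cdf \<nu> x\<bar> \<partial>lborel)"

lemma nn_integral_abs_diff_eq_crossing:
  fixes X Y :: "'a \<Rightarrow> real"
  assumes "sigma_finite_measure M" and X: "X \<in> borel_measurable M" and Y: "Y \<in> borel_measurable M"
  shows "(\<integral>\<^sup>+\<omega>. ennreal \<bar>X \<omega> - Y \<omega>\<bar> \<partial>M) =
    (\<integral>\<^sup>+x. emeasure M {\<omega>\<in>space M. X \<omega> \<le> x \<and> x < Y \<omega>}
          + emeasure M {\<omega>\<in>space M. Y \<omega> \<le> x \<and> x < X \<omega>} \<partial>lborel)"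
proof -
  interpret pair_sigma_finite M lborel
    by (intro pair_sigma_finite.intro assms(1) lborel.sigma_finite_measure_axioms)
  define f :: "'a \<Rightarrow> real \<Rightarrow> ennreal" where
    "f \<omega> x = indicator {X \<omega>..<Y \<omega>} x + indicator {Y \<omega>..<X \<omega>} x" for \<omega> x
  have "case_prod f \<in> borel_measurable (M \<Otimes>\<^sub>M lborel)"
    unfolding f_def indicator_def of_bool_def atLeastLessThan_iff using X Y by measurable
  then have "(\<integral>\<^sup>+\<omega>. \<integral>\<^sup>+x. f \<omega> x \<partial>lborel \<partial>M) = (\<integral>\<^sup>+x. \<integral>\<^sup>+\<omega>. f \<omega> x \<partial>M \<partial>lborel)"
    by (rule Fubini'[symmetric])
  moreover have "(\<integral>\<^sup>+x. f \<omega> x \<partial>lborel) = ennreal \<bar>X \<omega> - Y \<omega>\<bar>" for \<omega>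
    unfolding f_def by (subst nn_integral_add) (auto simp: abs_if)
  moreover have "(\<integral>\<^sup>+\<omega>. f \<omega> x \<partial>M) = emeasure M {\<omega>\<in>space M. X \<omega> \<le> x \<and> x < Y \<omega>}
      + emeasure M {\<omega>\<in>space M. Y \<omega> \<le> x \<and> x < X \<omega>}" for x
  proof -
    have "(\<integral>\<^sup>+\<omega>. f \<omega> x \<partial>M) = (\<integral>\<^sup>+\<omega>. indicator {\<omega>\<in>space M. X \<omega> \<le> x \<and> x < Y \<omega>} \<omega>
        + indicator {\<omega>\<in>space M. Y \<omega> \<le> x \<and> x < X \<omega>} \<omega> \<partial>M)"
      by (intro nn_integral_cong) (simp add: f_def indicator_def)
    also have "\<dots> = emeasure M {\<omega>\<in>space M. X \<omega> \<le> x \<and> x < Y \<omega>}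
        + emeasure M {\<omega>\<in>space M. Y \<omega> \<le> x \<and> x < X \<omega>}"
      using X Y by (subst nn_integral_add) auto
    finally show ?thesis .
  qed
  ultimately show ?thesis by simp
qed

lemma abs_diff_measure_le_crossing:
  fixes X Y :: "'a \<Rightarrow> real"
  assumes "finite_measure M" and X: "X \<in> borel_measurable M" and Y: "Y \<in> borel_measurable M"
  shows "\<bar>measure M {\<omega>\<in>space M. X \<omega> \<le> x} - measure M {\<omega>\<in>space M. Y \<omega> \<le> x}\<bar>
    \<le> measure M {\<omega>\<in>space M. X \<omega> \<le> x \<and> x < Y \<omega>} + measure M {\<omega>\<in>space M. Y \<omega> \<le> x \<and> x < X \<omega>}"
proof -
  interpret finite_measure M by fact
  have crossing: "measure M {\<omega>\<in>space M. A \<omega> \<le> x}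
      \<le> measure M {\<omega>\<in>space M. A \<omega> \<le> x \<and> x < B \<omega>} + measure M {\<omega>\<in>space M. B \<omega> \<le> x}"
    if A: "A \<in> borel_measurable M" and B: "B \<in> borel_measurable M" for A B :: "'a \<Rightarrow> real"
  proof -
    have "measure M {\<omega>\<in>space M. A \<omega> \<le> x}
        \<le> measure M ({\<omega>\<in>space M. A \<omega> \<le> x \<and> x < B \<omega>} \<union> {\<omega>\<in>space M. B \<omega> \<le> x})"
      using A B by (intro finite_measure_mono) auto
    also have "\<dots> \<le> measure M {\<omega>\<in>space M. A \<omega> \<le> x \<and> x < B \<omega>} + measure M {\<omega>\<in>space M. B \<omega> \<le> x}"
      using A B by (intro measure_Un_le) auto
    finally show ?thesis .
  qed
  show ?thesis using crossing[OF X Y] crossing[OF Y X] measure_nonneg[of M] by (smt (verit))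
qed

lemma nn_integral_abs_diff_distribution_le:
  fixes X Y :: "'a \<Rightarrow> real"
  assumes "prob_space M" and X: "X \<in> borel_measurable M" and Y: "Y \<in> borel_measurable M"
  shows "(\<integral>\<^sup>+x. ennreal \<bar>measure M {\<omega>\<in>space M. X \<omega> \<le> x} - measure M {\<omega>\<in>space M. Y \<omega> \<le> x}\<bar> \<partial>lborel)
    \<le> (\<integral>\<^sup>+\<omega>. ennreal \<bar>X \<omega> - Y \<omega>\<bar> \<partial>M)"
proof -
  interpret prob_space M by fact
  have "(\<integral>\<^sup>+x. ennreal \<bar>measure M {\<omega>\<in>space M. X \<omega> \<le> x} - measure M {\<omega>\<in>space M. Y \<omega> \<le> x}\<bar> \<partial>lborel)
      \<le> (\<integral>\<^sup>+x. emeasure M {\<omega>\<in>space M. X \<omega> \<le> x \<and> x < Y \<omega>}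
          + emeasure M {\<omega>\<in>space M. Y \<omega> \<le> x \<and> x < X \<omega>} \<partial>lborel)"
    by (intro nn_integral_mono order_trans[OF ennreal_leI[OF abs_diff_measure_le_crossing[OF finite_measure_axioms X Y]]])
      (simp add: emeasure_eq_measure)
  also have "\<dots> = (\<integral>\<^sup>+\<omega>. ennreal \<bar>X \<omega> - Y \<omega>\<bar> \<partial>M)"
    using nn_integral_abs_diff_eq_crossing[OF sigma_finite_measure_axioms X Y] by simp
  finally show ?thesis .
qed

lemma borel_measurable_fst_snd:
  "fst \<in> borel_measurable (borel :: (real \<times> real) measure)"
  "snd \<in> borel_measurable (borel :: (real \<times> real) measure)"
  by (simp_all add: borel_prod[symmetric])

lemma cdf_distance_le_wasserstein1: "cdf_distance \<mu> \<nu> \<le> wasserstein1 \<mu> \<nu>"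
  unfolding wasserstein1_def
proof (rule INF_greatest)
  fix \<pi> assume "\<pi> \<in> couplings \<mu> \<nu>"
  then have \<pi>: "prob_space \<pi>" "sets \<pi> = sets borel" and
    marginals: "\<mu> = distr \<pi> borel fst" "\<nu> = distr \<pi> borel snd"
    by (auto simp: couplings_def)
  have "fst \<in> borel_measurable \<pi>" "snd \<in> borel_measurable \<pi>"
    using borel_measurable_fst_snd by (simp_all add: measurable_cong_sets[OF \<pi>(2) refl])
  from nn_integral_abs_diff_distribution_le[OF \<pi>(1) this]
  show "cdf_distance \<mu> \<nu> \<le> (\<integral>\<^sup>+ p. ennreal \<bar>fst p - snd p\<bar> \<partial>\<pi>)"
    unfolding cdf_distance_def marginals cdf_distr[OF \<open>fst \<in> borel_measurable \<pi>\<close>]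
      cdf_distr[OF \<open>snd \<in> borel_measurable \<pi>\<close>] .
qed

lemma wasserstein1_le_nn_integral_quantile:
  assumes \<mu>: "real_distribution \<mu>" and \<nu>: "real_distribution \<nu>"
  shows "wasserstein1 \<mu> \<nu> \<le> (\<integral>\<^sup>+t. ennreal \<bar>quantile \<mu> t - quantile \<nu> t\<bar> \<partial>uniform01)"
proof -
  interpret U: prob_space uniform01 by (rule prob_space_uniform01)
  define h where "h t = (quantile \<mu> t, quantile \<nu> t)" for t
  have h: "h \<in> borel_measurable uniform01"
    unfolding h_def using borel_measurable_quantile \<mu> \<nu> by (intro borel_measurable_Pair) auto
  have "distr uniform01 borel h \<in> couplings \<mu> \<nu>"
    unfolding couplings_def using h
    by (auto intro: U.prob_space_distr simp: distr_distr borel_measurable_fst_snd comp_def h_def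
        distr_uniform01_quantile[OF \<mu>] distr_uniform01_quantile[OF \<nu>])
  then have "wasserstein1 \<mu> \<nu> \<le> (\<integral>\<^sup>+ p. ennreal \<bar>fst p - snd p\<bar> \<partial>distr uniform01 borel h)"
    unfolding wasserstein1_def by (rule INF_lower)
  also have "\<dots> = (\<integral>\<^sup>+t. ennreal \<bar>quantile \<mu> t - quantile \<nu> t\<bar> \<partial>uniform01)"
    using h by (subst nn_integral_distr)
      (auto simp: h_def intro!: borel_measurable_abs borel_measurable_diff borel_measurable_fst_snd)
  finally show ?thesis .
qed

lemma nn_integral_quantile_eq_cdf_distance:
  assumes \<mu>: "real_distribution \<mu>" and \<nu>: "real_distribution \<nu>"
  shows "(\<integral>\<^sup>+t. ennreal \<bar>quantile \<mu> t - quantile \<nu> t\<bar> \<partial>uniform01) = cdf_distance \<mu> \<nu>"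
proof -
  have crossing: "emeasure uniform01 {t \<in> space uniform01. quantile \<alpha> t \<le> x \<and> x < quantile \<beta> t}
      = ennreal (max 0 (cdf \<alpha> x - cdf \<beta> x))"
    if \<alpha>: "real_distribution \<alpha>" and \<beta>: "real_distribution \<beta>" for \<alpha> \<beta> x
  proof -
    have "quantile \<alpha> t \<le> x \<longleftrightarrow> t \<le> cdf \<alpha> x" "x < quantile \<beta> t \<longleftrightarrow> cdf \<beta> x < t"
      if "t \<in> {0<..<1}" for t
      using quantile_le_iff[OF \<alpha>, of t x] quantile_le_iff[OF \<beta>, of t x] that by (auto simp: not_le[symmetric])
    then have "{t \<in> space uniform01. quantile \<alpha> t \<le> x \<and> x < quantile \<beta> t} = {0<..<1} \<inter> {cdf \<beta> x<..cdf \<alpha> x}"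
      by auto
    then show ?thesis
      using \<alpha> \<beta> by (simp add: emeasure_uniform01_Ioc real_distribution.cdf_bounded_prob
          finite_borel_measure.cdf_nonneg real_distribution.finite_borel_measure_M)
  qed
  have "(\<integral>\<^sup>+t. ennreal \<bar>quantile \<mu> t - quantile \<nu> t\<bar> \<partial>uniform01)
      = (\<integral>\<^sup>+x. ennreal (max 0 (cdf \<mu> x - cdf \<nu> x)) + ennreal (max 0 (cdf \<nu> x - cdf \<mu> x)) \<partial>lborel)"
    using nn_integral_abs_diff_eq_crossing[OF prob_space_imp_sigma_finite[OF prob_space_uniform01]
        borel_measurable_quantile[OF \<mu>] borel_measurable_quantile[OF \<nu>]]
    unfolding crossing[OF \<mu> \<nu>] crossing[OF \<nu> \<mu>] .
  also have "\<dots> = cdf_distance \<mu> \<nu>"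
    unfolding cdf_distance_def
    by (intro nn_integral_cong) (auto simp: max_def ennreal_plus[symmetric] simp del: ennreal_plus)
  finally show ?thesis .
qed

lemma wasserstein1_eq_cdf_distance:
  "real_distribution \<mu> \<Longrightarrow> real_distribution \<nu> \<Longrightarrow> wasserstein1 \<mu> \<nu> = cdf_distance \<mu> \<nu>"
  by (metis antisym cdf_distance_le_wasserstein1 wasserstein1_le_nn_integral_quantile
      nn_integral_quantile_eq_cdf_distance)

lemma wasserstein1_eq_nn_integral_quantile:
  "real_distribution \<mu> \<Longrightarrow> real_distribution \<nu> \<Longrightarrow>
    wasserstein1 \<mu> \<nu> = (\<integral>\<^sup>+t. ennreal \<bar>quantile \<mu> t - quantile \<nu> t\<bar> \<partial>uniform01)"
  by (simp add: wasserstein1_eq_cdf_distance nn_integral_quantile_eq_cdf_distance)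

lemma nn_integral_abs_quantile:
  assumes "real_distribution \<mu>"
  shows "(\<integral>\<^sup>+t. ennreal \<bar>quantile \<mu> t\<bar> \<partial>uniform01) = (\<integral>\<^sup>+x. ennreal \<bar>x\<bar> \<partial>\<mu>)"
proof -
  have "(\<integral>\<^sup>+x. ennreal \<bar>x\<bar> \<partial>distr uniform01 borel (quantile \<mu>)) = (\<integral>\<^sup>+t. ennreal \<bar>quantile \<mu> t\<bar> \<partial>uniform01)"
    using borel_measurable_quantile[OF assms] by (intro nn_integral_distr) auto
  then show ?thesis unfolding distr_uniform01_quantile[OF assms] ..
qed

lemma wasserstein1_finite:
  assumes "P1 \<mu>" "P1 \<nu>"
  shows "wasserstein1 \<mu> \<nu> < top"
proof -
  have \<mu>: "real_distribution \<mu>" and \<nu>: "real_distribution \<nu>" using assms by (auto simp: P1_def)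
  have "wasserstein1 \<mu> \<nu> \<le> (\<integral>\<^sup>+t. ennreal \<bar>quantile \<mu> t\<bar> + ennreal \<bar>quantile \<nu> t\<bar> \<partial>uniform01)"
    unfolding wasserstein1_eq_nn_integral_quantile[OF \<mu> \<nu>]
    by (intro nn_integral_mono) (simp add: ennreal_plus[symmetric] del: ennreal_plus)
  also have "\<dots> = (\<integral>\<^sup>+x. ennreal \<bar>x\<bar> \<partial>\<mu>) + (\<integral>\<^sup>+x. ennreal \<bar>x\<bar> \<partial>\<nu>)"
    using borel_measurable_quantile[OF \<mu>]
      borel_measurable_quantile[OF \<nu>]
    by (simp add: nn_integral_add nn_integral_abs_quantile \<mu> \<nu>)
  also have "\<dots> < top"
    using assms by (simp add: P1_def integrable_iff_bounded)
  finally show ?thesis .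
qed

section \<open>Median selections\<close>

context
  fixes N :: nat and lam :: "nat \<Rightarrow> real" and \<theta> :: real
  assumes lam: "in_simplex N lam" and \<theta>: "0 \<le> \<theta>" "\<theta> \<le> 1"
begin

lemma VMed_cdf:
  assumes \<nu>: "\<forall>i\<in>{1..N}. real_distribution (\<nu> i)"
  shows "real_distribution (VMed N lam \<theta> \<nu>)"
    and "cdf (VMed N lam \<theta> \<nu>) x = median_mix N lam \<theta> (\<lambda>i. cdf (\<nu> i) x)"
proof -
  define H where "H x = median_mix N lam \<theta> (\<lambda>i. cdf (\<nu> i) x)" for x
  have mono: "H x \<le> H y" if "x \<le> y" for x y
    unfolding H_def using \<nu> that
    by (intro median_mix_mono[OF lam \<theta>] finite_borel_measure.cdf_nondecreasing
        real_distribution.finite_borel_measure_M) auto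
  have right_cont: "continuous (at_right a) H" for a
    unfolding H_def continuous_within using \<nu>
    by (intro tendsto_median_mix[OF lam \<theta>])
      (simp add: real_distribution.finite_borel_measure_M
        finite_borel_measure.cdf_is_right_cont[unfolded continuous_within])
  have "(H \<longlongrightarrow> median_mix N lam \<theta> (\<lambda>i. 0)) at_bot"
    unfolding H_def using \<nu>
    by (intro tendsto_median_mix[OF lam \<theta>])
      (simp add: real_distribution.finite_borel_measure_M finite_borel_measure.cdf_lim_at_bot)
  then have bot: "(H \<longlongrightarrow> 0) at_bot" by (simp add: median_mix_const[OF lam \<theta>])
  have "(H \<longlongrightarrow> median_mix N lam \<theta> (\<lambda>i. 1)) at_top"
    unfolding H_def using \<nu> by (intro tendsto_median_mix[OF lam \<theta>] real_distribution.cdf_lim_at_top_prob) auto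
  then have top: "(H \<longlongrightarrow> 1) at_top" by (simp add: median_mix_const[OF lam \<theta>])
  have dist: "real_distribution (interval_measure H)"
    using mono right_cont bot top by (rule real_distribution_interval_measure)
  have cdf: "cdf (interval_measure H) = H"
    using mono right_cont bot by (rule cdf_interval_measure)
  have "VMed N lam \<theta> \<nu> = interval_measure H"
    unfolding VMed_def median_mix_def[symmetric] H_def[symmetric]
    using dist cdf by (intro the_equality) (auto intro!: cdf_unique)
  then show "real_distribution (VMed N lam \<theta> \<nu>)"
    and "cdf (VMed N lam \<theta> \<nu>) x = median_mix N lam \<theta> (\<lambda>i. cdf (\<nu> i) x)"
    using dist cdf by (simp_all add: H_def)
qed

lemma HMed_quantile:
  assumes \<nu>: "\<forall>i\<in>{1..N}. real_distribution (\<nu> i)"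
  shows "real_distribution (HMed N lam \<theta> \<nu>)"
    and "t \<in> {0<..<1} \<Longrightarrow> quantile (HMed N lam \<theta> \<nu>) t = median_mix N lam \<theta> (\<lambda>i. quantile (\<nu> i) t)"
proof -
  define G where "G t = median_mix N lam \<theta> (\<lambda>i. quantile (\<nu> i) t)" for t
  have mono: "mono_on {0<..<1} G"
    unfolding G_def using \<nu>
    by (intro mono_onI median_mix_mono[OF lam \<theta>]) (auto intro: mono_onD[OF quantile_mono_on])
  have left_cont: "(G \<longlongrightarrow> G t) (at_left t)" if "t \<in> {0<..<1}" for t
    unfolding G_def using \<nu> that by (intro tendsto_median_mix[OF lam \<theta>] tendsto_quantile_at_left) auto
  note dist = quantile_distr_uniform01(1)[OF mono left_cont]
    and quantile = quantile_distr_uniform01(2)[OF mono left_cont]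
  have "HMed N lam \<theta> \<nu> = distr uniform01 borel G"
    unfolding HMed_def median_mix_def[symmetric] G_def[symmetric]
    using dist quantile by (intro the_equality) (auto intro!: real_distribution_eqI_quantile)
  then show "real_distribution (HMed N lam \<theta> \<nu>)"
    and "t \<in> {0<..<1} \<Longrightarrow> quantile (HMed N lam \<theta> \<nu>) t = median_mix N lam \<theta> (\<lambda>i. quantile (\<nu> i) t)"
    using dist quantile by (simp_all add: G_def)
qed

context
  fixes \<nu> \<nu>' :: "nat \<Rightarrow> real measure"
  assumes \<nu>: "\<forall>i\<in>{1..N}. real_distribution (\<nu> i)"
    and \<nu>': "\<forall>i\<in>{1..N}. real_distribution (\<nu>' i)"
begin

lemma wasserstein1_VMed_le:
  "wasserstein1 (VMed N lam \<theta> \<nu>) (VMed N lam \<theta> \<nu>') \<le> (\<Sum>i=1..N. wasserstein1 (\<nu> i) (\<nu>' i))"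
proof -
  have "wasserstein1 (VMed N lam \<theta> \<nu>) (VMed N lam \<theta> \<nu>')
      = cdf_distance (VMed N lam \<theta> \<nu>) (VMed N lam \<theta> \<nu>')"
    by (rule wasserstein1_eq_cdf_distance[OF VMed_cdf(1)[OF \<nu>] VMed_cdf(1)[OF \<nu>']])
  also have "\<dots> = (\<integral>\<^sup>+x. ennreal \<bar>median_mix N lam \<theta> (\<lambda>i. cdf (\<nu> i) x)
          - median_mix N lam \<theta> (\<lambda>i. cdf (\<nu>' i) x)\<bar> \<partial>lborel)"
    unfolding cdf_distance_def VMed_cdf(2)[OF \<nu>] VMed_cdf(2)[OF \<nu>'] ..
  also have "\<dots> \<le> (\<Sum>i=1..N. \<integral>\<^sup>+x. ennreal \<bar>cdf (\<nu> i) x - cdf (\<nu>' i) x\<bar> \<partial>lborel)"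
    using \<nu> \<nu>' by (intro nn_integral_abs_median_mix_diff_le[OF lam \<theta>]) (simp_all add: borel_measurable_cdf)
  also have "\<dots> = (\<Sum>i=1..N. wasserstein1 (\<nu> i) (\<nu>' i))"
    using \<nu> \<nu>' by (intro sum.cong) (simp_all add: wasserstein1_eq_cdf_distance cdf_distance_def)
  finally show ?thesis .
qed

lemma wasserstein1_HMed_le:
  "wasserstein1 (HMed N lam \<theta> \<nu>) (HMed N lam \<theta> \<nu>') \<le> (\<Sum>i=1..N. wasserstein1 (\<nu> i) (\<nu>' i))"
proof -
  have "wasserstein1 (HMed N lam \<theta> \<nu>) (HMed N lam \<theta> \<nu>')
      = (\<integral>\<^sup>+t. ennreal \<bar>quantile (HMed N lam \<theta> \<nu>) t - quantile (HMed N lam \<theta> \<nu>') t\<bar> \<partial>uniform01)"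
    by (rule wasserstein1_eq_nn_integral_quantile[OF HMed_quantile(1)[OF \<nu>] HMed_quantile(1)[OF \<nu>']])
  also have "\<dots> = (\<integral>\<^sup>+t. ennreal \<bar>median_mix N lam \<theta> (\<lambda>i. quantile (\<nu> i) t)
          - median_mix N lam \<theta> (\<lambda>i. quantile (\<nu>' i) t)\<bar> \<partial>uniform01)"
    by (intro nn_integral_cong) (simp add: HMed_quantile(2)[OF \<nu>] HMed_quantile(2)[OF \<nu>'])
  also have "\<dots> \<le> (\<Sum>i=1..N. \<integral>\<^sup>+t. ennreal \<bar>quantile (\<nu> i) t - quantile (\<nu>' i) t\<bar> \<partial>uniform01)"
    using \<nu> \<nu>' by (intro nn_integral_abs_median_mix_diff_le[OF lam \<theta>] borel_measurable_quantile) auto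
  also have "\<dots> = (\<Sum>i=1..N. wasserstein1 (\<nu> i) (\<nu>' i))"
    using \<nu> \<nu>' by (intro sum.cong) (simp_all add: wasserstein1_eq_nn_integral_quantile)
  finally show ?thesis .
qed

end

end

theorem lemma4p4:
  fixes N :: nat and lam :: "nat \<Rightarrow> real" and \<nu> \<nu>' :: "nat \<Rightarrow> real measure" and \<theta> :: real
  assumes "in_simplex N lam"
    and "\<forall>i\<in>{1..N}. P1 (\<nu> i)" and "\<forall>i\<in>{1..N}. P1 (\<nu>' i)"
    and "0 \<le> \<theta>" and "\<theta> \<le> 1"
  shows "W1 (VMed N lam \<theta> \<nu>) (VMed N lam \<theta> \<nu>') \<le> (\<Sum>i=1..N. W1 (\<nu> i) (\<nu>' i))
       \<and> W1 (HMed N lam \<theta> \<nu>) (HMed N lam \<theta> \<nu>') \<le> (\<Sum>i=1..N. W1 (\<nu> i) (\<nu>' i))"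
proof -
  have \<nu>: "\<forall>i\<in>{1..N}. real_distribution (\<nu> i)" and \<nu>': "\<forall>i\<in>{1..N}. real_distribution (\<nu>' i)"
    using assms(2,3) by (auto simp: P1_def)
  have finite: "\<forall>i\<in>{1..N}. wasserstein1 (\<nu> i) (\<nu>' i) < top"
    using assms(2,3) wasserstein1_finite by blast
  then have sum_finite: "(\<Sum>i=1..N. wasserstein1 (\<nu> i) (\<nu>' i)) < top" by simp
  have sum: "(\<Sum>i=1..N. W1 (\<nu> i) (\<nu>' i)) = enn2real (\<Sum>i=1..N. wasserstein1 (\<nu> i) (\<nu>' i))"
    unfolding W1_eq_enn2real_wasserstein1 using finite by (subst enn2real_sum) auto
  show ?thesis
    unfolding sum unfolding W1_eq_enn2real_wasserstein1
    using enn2real_mono[OF wasserstein1_VMed_le[OF assms(1,4,5) \<nu> \<nu>'] sum_finite]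
      enn2real_mono[OF wasserstein1_HMed_le[OF assms(1,4,5) \<nu> \<nu>'] sum_finite]
    by simp
qed

end
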